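(* Let $H\in\mathbb{R}^{m\times d}$, $L\in\mathbb{R}^{\ell\times d}$, $y\in\mathbb{R}^m$, $\tilde y\in\mathbb{R}^\ell$ be such that the solution sets $\{\theta\in\mathbb{R}^d: H\theta=y\}$ and $\{\theta\in\mathbb{R}^d: L\theta=\tilde y\}$ are both non-empty. Let $\Sigma\in\mathbb{R}^{d\times d}$ be symmetric positive semidefinite. Then: (a) If there is $a\in\mathbb{R}\setminus\{0\}$ with $a\,L^\top L=H^\top H$ and $a\,L^\top\tilde y=H^\top y$, then $\{\theta: H\theta=y\}=\{\theta: L\theta=\tilde y\}$. (b) Suppose $\operatorname{tr}(H\Sigma H^\top)>0$ and $\operatorname{tr}(L\Sigma L^\top)>0$. Then $ATS_s(x,H,y)=ATS_s(x,L,\tilde y)$ for all $x\in\mathbb{R}^d$ if and only if there exists $a>0$ with $a\,L^\top L=H^\top H$, $a\,L^\top\tilde y=H^\top y$ and $\|y\|=\sqrt{a}\,\|\tilde y\|$. (c) Suppose additionally $\operatorname{tr}(H\Sigma H^\top H\Sigma H^\top)\neq 0$ and $\operatorname{tr}(L\Sigma L^\top L\Sigma L^\top)\neq0$. Then $ATS_F(x,H,y)=ATS_F(x,L,\tilde y)$ for all $x\in\mathbb{R}^d$ if and only if there exists $a>0$ with $a\,L^\top L=H^\top H$, $a\,L^\top\tilde y=H^\top y$ and $\|y\|=\sqrt{a}\,\|\tilde y\|$.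
   Context: For a matrix $H\in\mathbb{R}^{m\times d}$, a vector $y\in\mathbb{R}^m$ and $x\in\mathbb{R}^d$, the Anova-type statistic is $ATS(x,H,y)=(Hx-y)^\top(Hx-y)$. Given a fixed symmetric positive semidefinite matrix $\Sigma\in\mathbb{R}^{d\times d}$, $ATS_s(x,H,y)=ATS(x,H,y)/\operatorname{tr}(H\Sigma H^\top)$ and $ATS_F(x,H,y)=ATS_s(x,H,y)\cdot\frac{[\operatorname{tr}(H\Sigma H^\top)]^2}{\operatorname{tr}(H\Sigma H^\top H\Sigma H^\top)}$. The same $\Sigma$ is used for both $H$ and $L$. $\|\cdot\|$ is the Euclidean norm. *)

theory Defs
  imports "HOL-Analysis.Analysis"
begin

definition psd :: "real^'d^'d \<Rightarrow> bool" where
  "psd S \<longleftrightarrow> transpose S = S \<and> (\<forall>v. 0 \<le> v \<bullet> (S *v v))"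

definition ATS :: "real^'d \<Rightarrow> real^'d^'m \<Rightarrow> real^'m \<Rightarrow> real" where
  "ATS x H y = (H *v x - y) \<bullet> (H *v x - y)"

definition ATS_s :: "real^'d^'d \<Rightarrow> real^'d \<Rightarrow> real^'d^'m \<Rightarrow> real^'m \<Rightarrow> real" where
  "ATS_s S x H y = ATS x H y / trace (H ** S ** transpose H)"

definition ATS_F :: "real^'d^'d \<Rightarrow> real^'d \<Rightarrow> real^'d^'m \<Rightarrow> real^'m \<Rightarrow> real" where
  "ATS_F S x H y = ATS_s S x H y * (trace (H ** S ** transpose H))^2
     / trace (H ** S ** transpose H ** H ** S ** transpose H)"

end

theory Submission imports Defs begin

text \<open>
  As a function of \<open>x\<close>, \<open>ATS(x,H,y) = x\<^sup>T H\<^sup>T H x - 2 (H\<^sup>T y)\<^sup>T x + \<parallel>y\<parallel>\<^sup>2\<close> is a quadratic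
  polynomial whose coefficients are \<open>H\<^sup>T H\<close>, \<open>H\<^sup>T y\<close> and \<open>\<parallel>y\<parallel>\<^sup>2\<close>; two such polynomials are
  proportional with factor \<open>a\<close> exactly when their coefficients are.  Both normalisations only
  divide by traces, and \<open>tr(H \<Sigma> H\<^sup>T) = tr(H\<^sup>T H \<Sigma>)\<close> depends on \<open>H\<close> only through \<open>H\<^sup>T H\<close>, so
  proportional coefficients scale the traces by \<open>a\<close> and \<open>a\<^sup>2\<close> respectively, which makes the
  normalised statistics equal.  For (a), \<open>H\<^sup>T H\<close> and \<open>H\<close> have the same kernel, so the normal
  equations \<open>H\<^sup>T H \<theta> = H\<^sup>T y\<close> have the same solutions as a consistent system \<open>H \<theta> = y\<close>.
\<close>

lemma matrix_vector_mul_inner_transpose: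
  fixes A :: "real^'n^'m"
  shows "(A *v x) \<bullet> w = x \<bullet> (transpose A *v w)"
proof -
  have "(A *v x) \<bullet> w = (w v* A) \<bullet> x"
    using dot_lmul_matrix[of w A x] by (simp only: inner_commute)
  then show ?thesis
    by (simp add: inner_commute)
qed

lemma inner_matrix_vector_mul_gram:
  fixes A :: "real^'n^'m"
  shows "(A *v x) \<bullet> (A *v z) = x \<bullet> ((transpose A ** A) *v z)"
  by (simp only: matrix_vector_mul_inner_transpose matrix_vector_mul_assoc)

lemma matrix_vector_mul_eq_0_if_gram:
  fixes A :: "real^'n^'m"
  assumes "(transpose A ** A) *v x = 0"
  shows "A *v x = 0"
  using inner_matrix_vector_mul_gram[of A x x] assms by simp

lemma symmetric_matrix_eq_0_if_quadratic_form_eq_0: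
  fixes M :: "real^'n^'n"
  assumes sym: "transpose M = M" and q: "\<And>x. x \<bullet> (M *v x) = 0"
  shows "M = 0"
proof -
  have polar: "z \<bullet> (M *v x) = 0" for x z
  proof -
    have "x \<bullet> (M *v z) = z \<bullet> (M *v x)"
      using matrix_vector_mul_inner_transpose[of M z x] sym by (simp add: inner_commute)
    moreover have "(x + z) \<bullet> (M *v (x + z))
        = x \<bullet> (M *v x) + x \<bullet> (M *v z) + z \<bullet> (M *v x) + z \<bullet> (M *v z)"
      by (simp only: matrix_vector_right_distrib inner_add_left inner_add_right add.assoc)
    ultimately show ?thesis
      using q[of "x + z"] q[of x] q[of z] by simp
  qed
  have "M *v x = 0 *v x" for x
    using polar[of "M *v x" x] by simp
  then show ?thesis
    using matrix_eq by blast
qed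

lemma quadratic_polynomial_eq_0_imp_coeffs_eq_0:
  fixes M :: "real^'n^'n"
  assumes sym: "transpose M = M" and p: "\<And>x. x \<bullet> (M *v x) - 2 * (v \<bullet> x) + k = 0"
  shows "M = 0" "v = 0" "k = 0"
proof -
  show k: "k = 0"
    using p[of 0] by simp
  have "x \<bullet> (M *v x) = 0" for x
    \<comment> \<open>the even part of the polynomial: add its values at \<open>x\<close> and \<open>-x\<close>\<close>
    using p[of x] p[of "-x"] k by (simp add: linear_neg[OF matrix_vector_mul_linear])
  then show M: "M = 0"
    using symmetric_matrix_eq_0_if_quadratic_form_eq_0[OF sym] by blast
  show "v = 0"
    using p[of v] M k by simp
qed

lemma ATS_quadratic_polynomial:
  "ATS x H y = x \<bullet> ((transpose H ** H) *v x) - 2 * ((transpose H *v y) \<bullet> x) + y \<bullet> y"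
proof -
  have "ATS x H y = (H *v x) \<bullet> (H *v x) - 2 * ((H *v x) \<bullet> y) + y \<bullet> y"
    unfolding ATS_def inner_diff_left inner_diff_right inner_commute[of y "H *v x"] by simp
  moreover have "(H *v x) \<bullet> y = (transpose H *v y) \<bullet> x"
    by (simp only: matrix_vector_mul_inner_transpose inner_commute[of x "transpose H *v y"])
  ultimately show ?thesis
    by (simp only: inner_matrix_vector_mul_gram)
qed

lemma transpose_diff: "transpose (A - B) = transpose A - transpose (B::'a::ab_group_add^'n^'m)"
  by (simp add: transpose_def vec_eq_iff)

lemma ATS_proportional_iff:
  fixes H :: "real^'d^'m" and L :: "real^'d^'l"
  shows "(\<forall>x. ATS x H y = c * ATS x L yt) \<longleftrightarrow>
    c *\<^sub>R (transpose L ** L) = transpose H ** H \<and> c *\<^sub>R (transpose L *v yt) = transpose H *v y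
    \<and> y \<bullet> y = c * (yt \<bullet> yt)"
proof -
  define M where "M = transpose H ** H - c *\<^sub>R (transpose L ** L)"
  define v where "v = transpose H *v y - c *\<^sub>R (transpose L *v yt)"
  define k where "k = y \<bullet> y - c * (yt \<bullet> yt)"
  have sym: "transpose M = M"
    by (simp add: M_def transpose_diff transpose_scalar matrix_transpose_mul)
  have difference: "ATS x H y - c * ATS x L yt = x \<bullet> (M *v x) - 2 * (v \<bullet> x) + k" for x
    by (simp add: ATS_quadratic_polynomial M_def v_def k_def matrix_vector_mult_diff_rdistrib
        scaleR_matrix_vector_assoc[symmetric] inner_diff_left inner_diff_right algebra_simps)
  show ?thesis
  proof
    assume "\<forall>x. ATS x H y = c * ATS x L yt"
    then have "x \<bullet> (M *v x) - 2 * (v \<bullet> x) + k = 0" for x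
      using difference[of x] by simp
    then have "M = 0" "v = 0" "k = 0"
      using quadratic_polynomial_eq_0_imp_coeffs_eq_0[OF sym] by blast+
    then show "c *\<^sub>R (transpose L ** L) = transpose H ** H \<and>
        c *\<^sub>R (transpose L *v yt) = transpose H *v y \<and> y \<bullet> y = c * (yt \<bullet> yt)"
      by (simp add: M_def v_def k_def)
  next
    assume "c *\<^sub>R (transpose L ** L) = transpose H ** H \<and>
        c *\<^sub>R (transpose L *v yt) = transpose H *v y \<and> y \<bullet> y = c * (yt \<bullet> yt)"
    then have "M = 0" "v = 0" "k = 0"
      by (simp_all add: M_def v_def k_def)
    then show "\<forall>x. ATS x H y = c * ATS x L yt"
      using difference by simp
  qed
qed

lemma trace_scaleR: "trace (a *\<^sub>R (A::real^'n^'n)) = a * trace A"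
  by (simp add: trace_def sum_distrib_left)

lemma trace_congruence_gram:
  fixes H :: "real^'d^'m" and S :: "real^'d^'d"
  shows "trace (H ** S ** transpose H) = trace ((transpose H ** H) ** S)"
    and "trace (H ** S ** transpose H ** H ** S ** transpose H)
       = trace ((transpose H ** H) ** S ** (transpose H ** H) ** S)"
  using trace_mul_sym[of "H ** S" "transpose H"]
    trace_mul_sym[of "H ** S ** transpose H ** H ** S" "transpose H"]
  by (simp_all only: matrix_mul_assoc)

lemma trace_congruence_if_gram_scaled:
  fixes H :: "real^'d^'m" and L :: "real^'d^'l"
  assumes "a *\<^sub>R (transpose L ** L) = transpose H ** H"
  shows "trace (H ** S ** transpose H) = a * trace (L ** S ** transpose L)"
    and "trace (H ** S ** transpose H ** H ** S ** transpose H)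
       = a\<^sup>2 * trace (L ** S ** transpose L ** L ** S ** transpose L)"
  unfolding trace_congruence_gram assms[symmetric]
  by (simp_all only: scalar_matrix_assoc[symmetric] matrix_scalar_ac trace_scaleR
      scaleR_scaleR power2_eq_square)

lemma solutions_subset_if_gram_scaled:
  fixes H :: "real^'d^'m" and L :: "real^'d^'l"
  assumes gram: "a *\<^sub>R (transpose L ** L) = transpose H ** H"
    and rhs: "a *\<^sub>R (transpose L *v yt) = transpose H *v y"
    and t0: "H *v t0 = y"
  shows "{\<theta>. L *v \<theta> = yt} \<subseteq> {\<theta>. H *v \<theta> = y}"
proof
  fix t assume "t \<in> {\<theta>. L *v \<theta> = yt}"
  then have t: "L *v t = yt" by simp
  have "(transpose H ** H) *v t = a *\<^sub>R (transpose L *v (L *v t))"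
    by (simp only: gram[symmetric] scaleR_matrix_vector_assoc[symmetric] matrix_vector_mul_assoc)
  also have "\<dots> = (transpose H ** H) *v t0"
    by (simp only: t rhs t0[symmetric] matrix_vector_mul_assoc)
  finally have "(transpose H ** H) *v t = (transpose H ** H) *v t0" .
  then have "(transpose H ** H) *v (t - t0) = 0"
    by (simp add: matrix_vector_mult_diff_distrib)
  then have "H *v (t - t0) = 0"
    by (rule matrix_vector_mul_eq_0_if_gram)
  then show "t \<in> {\<theta>. H *v \<theta> = y}"
    using t0 by (simp add: matrix_vector_mult_diff_distrib)
qed

lemma solutions_eq_if_gram_scaled:
  fixes H :: "real^'d^'m" and L :: "real^'d^'l"
  assumes "a \<noteq> 0"
    and gram: "a *\<^sub>R (transpose L ** L) = transpose H ** H"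
    and rhs: "a *\<^sub>R (transpose L *v yt) = transpose H *v y"
    and "H *v t0 = y" and "L *v t1 = yt"
  shows "{\<theta>. H *v \<theta> = y} = {\<theta>. L *v \<theta> = yt}"
proof
  show "{\<theta>. L *v \<theta> = yt} \<subseteq> {\<theta>. H *v \<theta> = y}"
    using solutions_subset_if_gram_scaled[OF gram rhs] assms(4) .
  have "inverse a *\<^sub>R (transpose H ** H) = transpose L ** L"
    and "inverse a *\<^sub>R (transpose H *v y) = transpose L *v yt"
    using \<open>a \<noteq> 0\<close> by (simp_all del: transpose_matrix_vector flip: gram rhs)
  from solutions_subset_if_gram_scaled[OF this assms(5)]
  show "{\<theta>. H *v \<theta> = y} \<subseteq> {\<theta>. L *v \<theta> = yt}" .
qed

lemma norm_eq_sqrt_mult_norm_iff: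
  fixes y :: "'a::real_inner" and yt :: "'b::real_inner"
  assumes "c \<ge> 0"
  shows "norm y = sqrt c * norm yt \<longleftrightarrow> y \<bullet> y = c * (yt \<bullet> yt)"
  using assms by (simp add: norm_eq_sqrt_inner flip: real_sqrt_mult)

lemma exists_pos_gram_scaling_iff:
  fixes H :: "real^'d^'m" and L :: "real^'d^'l"
  shows "(\<exists>a>0. a *\<^sub>R (transpose L ** L) = transpose H ** H
            \<and> a *\<^sub>R (transpose L *v yt) = transpose H *v y \<and> norm y = sqrt a * norm yt)
    \<longleftrightarrow> (\<exists>a>0. \<forall>x. ATS x H y = a * ATS x L yt)"
  by (metis ATS_proportional_iff norm_eq_sqrt_mult_norm_iff less_imp_le)

lemma ATS_s_eq_iff_proportional:
  fixes H :: "real^'d^'m" and L :: "real^'d^'l"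
  assumes tH: "trace (H ** S ** transpose H) > 0" and tL: "trace (L ** S ** transpose L) > 0"
  shows "(\<forall>x. ATS_s S x H y = ATS_s S x L yt) \<longleftrightarrow> (\<exists>a>0. \<forall>x. ATS x H y = a * ATS x L yt)"
proof
  assume "\<forall>x. ATS_s S x H y = ATS_s S x L yt"
  then have "\<forall>x. ATS x H y =
      trace (H ** S ** transpose H) / trace (L ** S ** transpose L) * ATS x L yt"
    using tH tL by (simp add: ATS_s_def field_simps)
  then show "\<exists>a>0. \<forall>x. ATS x H y = a * ATS x L yt"
    using tH tL divide_pos_pos by blast
next
  assume "\<exists>a>0. \<forall>x. ATS x H y = a * ATS x L yt"
  then obtain a where "a > 0" and proportional: "\<forall>x. ATS x H y = a * ATS x L yt"
    by blast
  then have "trace (H ** S ** transpose H) = a * trace (L ** S ** transpose L)"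
    using ATS_proportional_iff trace_congruence_if_gram_scaled(1) by blast
  then show "\<forall>x. ATS_s S x H y = ATS_s S x L yt"
    using proportional \<open>a > 0\<close> by (simp add: ATS_s_def)
qed

lemma ATS_F_eq:
  assumes "trace (H ** S ** transpose H) \<noteq> 0"
  shows "ATS_F S x H y
    = ATS x H y * trace (H ** S ** transpose H) / trace (H ** S ** transpose H ** H ** S ** transpose H)"
  using assms by (simp add: ATS_F_def ATS_s_def power2_eq_square)

lemma ATS_F_eq_iff_proportional:
  fixes H :: "real^'d^'m" and L :: "real^'d^'l"
  assumes tH: "trace (H ** S ** transpose H) > 0" and tL: "trace (L ** S ** transpose L) > 0"
    and qH: "trace (H ** S ** transpose H ** H ** S ** transpose H) \<noteq> 0"
    and qL: "trace (L ** S ** transpose L ** L ** S ** transpose L) \<noteq> 0"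
  shows "(\<forall>x. ATS_F S x H y = ATS_F S x L yt) \<longleftrightarrow> (\<exists>a>0. \<forall>x. ATS x H y = a * ATS x L yt)"
proof
  assume "\<forall>x. ATS_F S x H y = ATS_F S x L yt"
  then have "\<forall>x. ATS x H y =
      trace (L ** S ** transpose L) * trace (H ** S ** transpose H ** H ** S ** transpose H)
      / (trace (H ** S ** transpose H) * trace (L ** S ** transpose L ** L ** S ** transpose L))
      * ATS x L yt"
    using tH tL qH qL by (simp add: ATS_F_eq field_simps)
  then obtain a where proportional: "\<forall>x. ATS x H y = a * ATS x L yt"
    by blast
  then have "trace (H ** S ** transpose H) = a * trace (L ** S ** transpose L)"
    using ATS_proportional_iff trace_congruence_if_gram_scaled(1) by blast
  then have "a > 0"
    using tH tL zero_less_mult_pos2 by metis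
  with proportional show "\<exists>a>0. \<forall>x. ATS x H y = a * ATS x L yt"
    by blast
next
  assume "\<exists>a>0. \<forall>x. ATS x H y = a * ATS x L yt"
  then obtain a where "a > 0" and proportional: "\<forall>x. ATS x H y = a * ATS x L yt"
    by blast
  then have gram: "a *\<^sub>R (transpose L ** L) = transpose H ** H"
    using ATS_proportional_iff by blast
  show "\<forall>x. ATS_F S x H y = ATS_F S x L yt"
    using proportional \<open>a > 0\<close> tH tL qL
    by (simp add: ATS_F_eq trace_congruence_if_gram_scaled[OF gram] power2_eq_square)
qed

theorem theorem2:
  fixes H :: "real^'d^'m" and L :: "real^'d^'l" and y :: "real^'m" and yt :: "real^'l"
    and S :: "real^'d^'d"
  assumes solH: "{\<theta>. H *v \<theta> = y} \<noteq> {}"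
    and solL: "{\<theta>. L *v \<theta> = yt} \<noteq> {}"
    and S_psd: "psd S"
  shows
    "(\<forall>a::real. a \<noteq> 0 \<and> a *\<^sub>R (transpose L ** L) = transpose H ** H
        \<and> a *\<^sub>R (transpose L *v yt) = transpose H *v y
        \<longrightarrow> {\<theta>. H *v \<theta> = y} = {\<theta>. L *v \<theta> = yt})
   \<and> (trace (H ** S ** transpose H) > 0 \<and> trace (L ** S ** transpose L) > 0 \<longrightarrow>
        ((\<forall>x. ATS_s S x H y = ATS_s S x L yt) \<longleftrightarrow>
         (\<exists>a::real. a > 0 \<and> a *\<^sub>R (transpose L ** L) = transpose H ** H
           \<and> a *\<^sub>R (transpose L *v yt) = transpose H *v y \<and> norm y = sqrt a * norm yt)))
   \<and> (trace (H ** S ** transpose H) > 0 \<and> trace (L ** S ** transpose L) > 0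
       \<and> trace (H ** S ** transpose H ** H ** S ** transpose H) \<noteq> 0
       \<and> trace (L ** S ** transpose L ** L ** S ** transpose L) \<noteq> 0 \<longrightarrow>
        ((\<forall>x. ATS_F S x H y = ATS_F S x L yt) \<longleftrightarrow>
         (\<exists>a::real. a > 0 \<and> a *\<^sub>R (transpose L ** L) = transpose H ** H
           \<and> a *\<^sub>R (transpose L *v yt) = transpose H *v y \<and> norm y = sqrt a * norm yt)))"
proof (intro conjI impI allI)
  fix a :: real
  assume "a \<noteq> 0 \<and> a *\<^sub>R (transpose L ** L) = transpose H ** H
        \<and> a *\<^sub>R (transpose L *v yt) = transpose H *v y"
  moreover obtain t0 t1 where "H *v t0 = y" and "L *v t1 = yt"
    using solH solL by blast
  ultimately show "{\<theta>. H *v \<theta> = y} = {\<theta>. L *v \<theta> = yt}"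
    using solutions_eq_if_gram_scaled by blast
qed (unfold exists_pos_gram_scaling_iff,
    (elim conjE, rule ATS_s_eq_iff_proportional ATS_F_eq_iff_proportional, assumption+)+)

end
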